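(* Let $G$ be a finitely generated group with an automorphism $f$ whose subgroup of fixed points is not finitely generated. Then for every integer $n\geq 1$, every $n$-configuration $c$ with $|c^{-1}(1)|\leq 1$ is realisable in $G^n$.
   Context: $G^n$ denotes the direct product of $n$ copies of $G$. Write $[n]=\{1,\dots,n\}$. An $n$-configuration is a map $c\colon \mathcal{P}([n])\setminus\{\emptyset\}\to\{0,1\}$. An $n$-configuration $c$ is realisable in a group $G$ if there exist subgroups $H_1,\dots,H_n\leq G$ such that for every non-empty subset $I\subseteq[n]$, the subgroup $\bigcap_{i\in I}H_i$ is finitely generated if and only if $c(I)=0$. *)

theory Defs
  imports "HOL-Algebra.Algebra"
begin

definition fin_gen :: "('a, 'b) monoid_scheme \<Rightarrow> 'a set \<Rightarrow> bool" where
  "fin_gen K H \<longleftrightarrow> (\<exists>S. finite S \<and> S \<subseteq> H \<and> generate K S = H)"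

definition power_group :: "('a, 'b) monoid_scheme \<Rightarrow> nat \<Rightarrow> (nat \<Rightarrow> 'a) monoid" where
  "power_group G n =
     \<lparr>carrier = PiE {1..n} (\<lambda>_. carrier G),
      monoid.mult = (\<lambda>x y. \<lambda>i\<in>{1..n}. x i \<otimes>\<^bsub>G\<^esub> y i),
      monoid.one = (\<lambda>i\<in>{1..n}. \<one>\<^bsub>G\<^esub>)\<rparr>"

definition configuration :: "nat \<Rightarrow> (nat set \<Rightarrow> nat) \<Rightarrow> bool" where
  "configuration n c \<longleftrightarrow> (\<forall>I. I \<subseteq> {1..n} \<and> I \<noteq> {} \<longrightarrow> c I \<in> {0, 1})"

definition realisable :: "nat \<Rightarrow> (nat set \<Rightarrow> nat) \<Rightarrow> ('a, 'b) monoid_scheme \<Rightarrow> bool" where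
  "realisable n c K \<longleftrightarrow>
     (\<exists>H :: nat \<Rightarrow> 'a set. (\<forall>i\<in>{1..n}. subgroup (H i) K) \<and>
        (\<forall>I. I \<subseteq> {1..n} \<and> I \<noteq> {} \<longrightarrow> (fin_gen K (\<Inter>i\<in>I. H i) \<longleftrightarrow> c I = 0)))"

end

theory Submission
  imports Defs
begin

(* Let k = |I0| for the unique I0 with c(I0) = 1 and arrange the coordinates 1..k of G^n in a
   cycle. For every edge p of the cycle take the subgroup of tuples whose p-th coordinate equals
   the next one, where the edge from k back to 1 is twisted by f: x_k = f(x_1). Indices outside
   I0 get the trivial subgroup. The intersection over all k edges consists of tuples that are
   constant on 1..k with an f-fixed value, so it maps onto Fix(f) and is not finitely generated.
   Removing any edge cuts the cycle into paths, and then the intersection is the image of an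
   endomorphism of G^n that copies a coordinate along each path; as G^n is finitely generated,
   so is this image. *)

lemma power_group_eq_product_group: "power_group G n = product_group {1..n} (\<lambda>_. G)"
  by (simp add: power_group_def product_group_def)

lemma fin_gen_trivial_subgroup:
  assumes "group K"
  shows "fin_gen K {\<one>\<^bsub>K\<^esub>}"
  unfolding fin_gen_def using group.generate_empty[OF assms] by blast

lemma fin_gen_hom_image:
  assumes "group K" "group L" "h \<in> hom K L" "fin_gen K A" "A \<subseteq> carrier K"
  shows "fin_gen L (h ` A)"
proof -
  obtain S where S: "finite S" "S \<subseteq> A" "generate K S = A"
    using assms(4) by (auto simp: fin_gen_def)
  interpret group_hom K L h
    using assms(1-3) by (simp add: group_hom_def group_hom_axioms_def)
  have "generate L (h ` S) = h ` A"
    using generate_img[of S] S assms(5) by auto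
  with S show ?thesis
    unfolding fin_gen_def by (intro exI[of _ "h ` S"]) auto
qed

lemma subgroup_equalizer:
  assumes "group K" "h \<in> hom K L" "h' \<in> hom K L" "group L"
  shows "subgroup {x \<in> carrier K. h x = h' x} K"
proof -
  interpret h: group_hom K L h
    using assms by (simp add: group_hom_def group_hom_axioms_def)
  interpret h': group_hom K L h'
    using assms by (simp add: group_hom_def group_hom_axioms_def)
  show ?thesis
    by (rule h.G.subgroupI) auto
qed

definition coordinate_embedding ::
  "'i set \<Rightarrow> ('i \<Rightarrow> ('a, 'b) monoid_scheme) \<Rightarrow> 'i \<Rightarrow> 'a \<Rightarrow> 'i \<Rightarrow> 'a" where
  "coordinate_embedding I G i a = (\<lambda>j\<in>I. if j = i then a else \<one>\<^bsub>G j\<^esub>)"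

lemma coordinate_embedding_hom:
  assumes "i \<in> I" "\<And>j. j \<in> I \<Longrightarrow> group (G j)"
  shows "coordinate_embedding I G i \<in> hom (G i) (product_group I G)"
  using assms by (auto simp: hom_def coordinate_embedding_def group.is_monoid intro!: restrict_ext)

lemma product_group_generated_by_coordinates:
  assumes "finite I" "\<And>i. i \<in> I \<Longrightarrow> group (G i)"
  shows "carrier (product_group I G)
           \<subseteq> generate (product_group I G) (\<Union>i\<in>I. coordinate_embedding I G i ` carrier (G i))"
proof -
  let ?P = "product_group I G"
  let ?E = "generate ?P (\<Union>i\<in>I. coordinate_embedding I G i ` carrier (G i))"
  have "x \<in> ?E" if "finite J" "x \<in> carrier ?P" "\<forall>i\<in>I - J. x i = \<one>\<^bsub>G i\<^esub>" for J x
    using that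
  proof (induction J arbitrary: x rule: finite_induct)
    case empty
    then have "x = \<one>\<^bsub>?P\<^esub>"
      by (auto simp: PiE_iff extensional_def)
    then show ?case
      by (simp only: generate.one)
  next
    case (insert i J)
    show ?case
    proof (cases "i \<in> I")
      case False
      then show ?thesis
        using insert by auto
    next
      case True
      define x' where "x' = (\<lambda>j\<in>I. if j = i then \<one>\<^bsub>G j\<^esub> else x j)"
      have "x' \<in> ?E"
        using insert.prems
        by (intro insert.IH) (auto simp: x'_def PiE_iff extensional_def group.is_monoid assms(2))
      moreover have "coordinate_embedding I G i (x i) \<in> ?E"
        using True insert.prems by (intro generate.incl) auto
      moreover have "x = x' \<otimes>\<^bsub>?P\<^esub> coordinate_embedding I G i (x i)"
        using insert.prems assms(2)
        by (auto simp: x'_def coordinate_embedding_def PiE_iff extensional_def group.is_monoid)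
      ultimately show ?thesis
        by (metis generate.eng)
    qed
  qed
  then show ?thesis
    using assms(1) by blast
qed

lemma fin_gen_product_group:
  assumes "finite I" "\<And>i. i \<in> I \<Longrightarrow> group (G i)"
    and "\<And>i. i \<in> I \<Longrightarrow> fin_gen (G i) (carrier (G i))"
  shows "fin_gen (product_group I G) (carrier (product_group I G))"
proof -
  let ?P = "product_group I G"
  interpret P: group ?P
    using assms(2) by simp
  have "\<forall>i\<in>I. \<exists>S. finite S \<and> S \<subseteq> carrier (G i) \<and> generate (G i) S = carrier (G i)"
    using assms(3) by (auto simp: fin_gen_def)
  then obtain S where S: "\<And>i. i \<in> I \<Longrightarrow>
      finite (S i) \<and> S i \<subseteq> carrier (G i) \<and> generate (G i) (S i) = carrier (G i)"
    by (metis bchoice)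
  define gens where "gens = (\<Union>i\<in>I. coordinate_embedding I G i ` S i)"
  have "coordinate_embedding I G i ` S i \<subseteq> carrier ?P" if "i \<in> I" for i
    using S[OF that] hom_carrier[OF coordinate_embedding_hom[of i I G, OF that assms(2)]] by blast
  then have gens_carrier: "gens \<subseteq> carrier ?P"
    by (auto simp: gens_def)
  have "coordinate_embedding I G i ` carrier (G i) \<subseteq> generate ?P gens" if "i \<in> I" for i
  proof -
    interpret group_hom "G i" ?P "coordinate_embedding I G i"
      using assms(2)[OF that] P.is_group coordinate_embedding_hom[of i I G, OF that assms(2)]
      by (simp add: group_hom_def group_hom_axioms_def)
    have "coordinate_embedding I G i ` carrier (G i) = generate ?P (coordinate_embedding I G i ` S i)"
      using S[OF that] generate_img[of "S i"] by simp
    also have "\<dots> \<subseteq> generate ?P gens"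
      using that by (intro P.mono_generate) (auto simp: gens_def)
    finally show ?thesis .
  qed
  then have "generate ?P (\<Union>i\<in>I. coordinate_embedding I G i ` carrier (G i)) \<subseteq> generate ?P gens"
    by (intro P.generate_subgroup_incl P.generate_is_subgroup gens_carrier UN_least)
  then have "carrier ?P \<subseteq> generate ?P gens"
    using product_group_generated_by_coordinates[of I G, OF assms(1,2)] by (rule subset_trans[rotated])
  then have "generate ?P gens = carrier ?P"
    using P.generate_incl[OF gens_carrier] by blast
  moreover have "finite gens"
    using S assms(1) by (simp add: gens_def)
  ultimately show ?thesis
    unfolding fin_gen_def using gens_carrier by blast
qed

lemma group_power_group: "group G \<Longrightarrow> group (power_group G n)"
  by (simp add: power_group_eq_product_group)

lemma fin_gen_power_group:
  assumes "group G" "fin_gen G (carrier G)"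
  shows "fin_gen (power_group G n) (carrier (power_group G n))"
  using fin_gen_product_group[of "{1..n}" "\<lambda>_. G"] assms by (simp add: power_group_eq_product_group)

definition next_gap :: "nat set \<Rightarrow> nat \<Rightarrow> nat" where
  "next_gap T j = (LEAST m. j \<le> m \<and> m \<notin> T)"

lemma next_gap:
  assumes "finite T"
  shows "j \<le> next_gap T j" "next_gap T j \<notin> T" "{j..<next_gap T j} \<subseteq> T"
proof -
  obtain b where "T \<subseteq> {..<b}"
    using finite_nat_bounded[OF assms] by blast
  then have "j \<le> max j b \<and> max j b \<notin> T"
    by auto
  then have "j \<le> next_gap T j \<and> next_gap T j \<notin> T"
    unfolding next_gap_def by (rule LeastI)
  moreover have "t \<in> T" if "j \<le> t" "t < next_gap T j" for t
    using not_less_Least[OF that(2)[unfolded next_gap_def]] that(1) by blast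
  ultimately show "j \<le> next_gap T j" "next_gap T j \<notin> T" "{j..<next_gap T j} \<subseteq> T"
    by auto
qed

lemma next_gap_le: "m \<notin> T \<Longrightarrow> j \<le> m \<Longrightarrow> next_gap T j \<le> m"
  unfolding next_gap_def by (rule Least_le) simp

lemma next_gap_Suc: "j \<in> T \<Longrightarrow> next_gap T (Suc j) = next_gap T j"
  unfolding next_gap_def by (rule arg_cong[where f = Least]) (auto simp: Suc_le_eq le_less)

definition cycle_link ::
  "('a, 'b) monoid_scheme \<Rightarrow> ('a \<Rightarrow> 'a) \<Rightarrow> nat \<Rightarrow> nat \<Rightarrow> nat \<Rightarrow> (nat \<Rightarrow> 'a) set" where
  "cycle_link G f n k p =
     {x \<in> carrier (power_group G n). x p = (if p = k then f (x 1) else x (Suc p))}"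

lemma subgroup_cycle_link:
  assumes "group G" "f \<in> hom G G" "p \<in> {1..k}" "k \<le> n"
  shows "subgroup (cycle_link G f n k p) (power_group G n)"
proof -
  have proj: "(\<lambda>x. x i) \<in> hom (power_group G n) G" if "i \<in> {1..n}" for i
    using that by (auto simp: power_group_eq_product_group hom_def)
  have "(\<lambda>x. if p = k then f (x 1) else x (Suc p)) \<in> hom (power_group G n) G"
  proof (cases "p = k")
    case True
    then show ?thesis
      using hom_compose[OF proj assms(2)] assms(3,4) by (simp add: comp_def)
  next
    case False
    then show ?thesis
      using proj assms(3,4) by simp
  qed
  then show ?thesis
    unfolding cycle_link_def using assms proj
    by (intro subgroup_equalizer) (auto simp: power_group_eq_product_group)
qed

lemma cycle_links_chain:
  assumes "x \<in> (\<Inter>p\<in>T. cycle_link G f n k p)" "{j..<m} \<subseteq> T" "j \<le> m" "m \<le> k"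
  shows "x j = x m"
proof -
  have step: "x t = x (Suc t)" if "j \<le> t" "t < m" for t
    using assms that by (auto simp: cycle_link_def)
  from \<open>j \<le> m\<close> show ?thesis
    by (induction rule: dec_induct) (auto simp: step)
qed

lemma not_fin_gen_all_cycle_links:
  assumes "group G" "f \<in> hom G G" "1 \<le> k" "k \<le> n"
    and "\<not> fin_gen G {a \<in> carrier G. f a = a}"
  shows "\<not> fin_gen (power_group G n) (\<Inter>p\<in>{1..k}. cycle_link G f n k p)"
proof
  let ?K = "\<Inter>p\<in>{1..k}. cycle_link G f n k p"
  assume fin_gen_K: "fin_gen (power_group G n) ?K"
  have proj: "(\<lambda>x. x 1) \<in> hom (power_group G n) G"
    using assms(3,4) by (auto simp: power_group_eq_product_group hom_def)
  have K_carrier: "?K \<subseteq> carrier (power_group G n)"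
    using assms(3) by (auto simp: cycle_link_def)
  have "(\<lambda>x. x 1) ` ?K = {a \<in> carrier G. f a = a}"
  proof (intro equalityI subsetI)
    fix a assume "a \<in> (\<lambda>x. x 1) ` ?K"
    then obtain x where x: "x \<in> ?K" "a = x 1"
      by blast
    have "x 1 = x k"
      using cycle_links_chain[OF x(1), of 1 k] assms(3) by fastforce
    moreover have "x k = f (x 1)"
      using x(1) assms(3) by (auto simp: cycle_link_def)
    moreover have "x 1 \<in> carrier G"
      using subsetD[OF K_carrier x(1)] assms(3,4) by (auto simp: power_group_eq_product_group)
    ultimately show "a \<in> {a \<in> carrier G. f a = a}"
      using x(2) by simp
  next
    fix a assume a: "a \<in> {a \<in> carrier G. f a = a}"
    have "(\<lambda>j\<in>{1..n}. a) \<in> ?K"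
      using a assms(3,4) by (auto simp: cycle_link_def power_group_eq_product_group)
    moreover have "(\<lambda>j\<in>{1..n}. a) 1 = a"
      using assms(3,4) by simp
    ultimately show "a \<in> (\<lambda>x. x 1) ` ?K"
      by (metis imageI)
  qed
  with fin_gen_hom_image[OF group_power_group[OF assms(1)] assms(1) proj fin_gen_K K_carrier]
  show False
    using assms(5) by simp
qed

(* Coordinate j \<le> k copies the first coordinate at or after j that T leaves unconstrained;
   if there is none up to k, it wraps around through f to the first unconstrained coordinate. *)
definition cycle_retraction ::
  "('a, 'b) monoid_scheme \<Rightarrow> ('a \<Rightarrow> 'a) \<Rightarrow> nat \<Rightarrow> nat \<Rightarrow> nat set \<Rightarrow> (nat \<Rightarrow> 'a) \<Rightarrow> nat \<Rightarrow> 'a" where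
  "cycle_retraction G f n k T y =
     (\<lambda>j\<in>{1..n}. if k < j then y j
                  else if next_gap T j \<le> k then y (next_gap T j)
                  else f (y (next_gap T 1)))"

lemma next_gap_proper_subset:
  assumes "T \<subset> {1..k}"
  shows "next_gap T 1 \<in> {1..k}"
    and "1 \<le> j \<Longrightarrow> next_gap T j \<le> k \<Longrightarrow> next_gap T j \<in> {1..k}"
proof -
  have fin: "finite T"
    using assms finite_subset by blast
  obtain m where "m \<in> {1..k}" "m \<notin> T"
    using assms by blast
  then show "next_gap T 1 \<in> {1..k}"
    using next_gap(1)[OF fin, of 1] next_gap_le[of m T 1] by auto
  show "next_gap T j \<in> {1..k}" if "1 \<le> j" "next_gap T j \<le> k"
    using next_gap(1)[OF fin, of j] that by auto
qed

lemma cycle_retraction_hom: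
  assumes "group G" "f \<in> hom G G" "k \<le> n" "T \<subset> {1..k}"
  shows "cycle_retraction G f n k T \<in> hom (power_group G n) (power_group G n)"
proof -
  have gap_in: "next_gap T 1 \<in> {1..n}" "\<And>j. 1 \<le> j \<Longrightarrow> next_gap T j \<le> k \<Longrightarrow> next_gap T j \<in> {1..n}"
    using next_gap_proper_subset[OF assms(4)] assms(3) by fastforce+
  show ?thesis
  proof (rule homI)
    fix x assume "x \<in> carrier (power_group G n)"
    then show "cycle_retraction G f n k T x \<in> carrier (power_group G n)"
      using gap_in assms(2)
      by (auto simp: cycle_retraction_def power_group_eq_product_group PiE_iff hom_def)
  next
    fix x y assume "x \<in> carrier (power_group G n)" "y \<in> carrier (power_group G n)"
    then show "cycle_retraction G f n k T (x \<otimes>\<^bsub>power_group G n\<^esub> y) =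
        cycle_retraction G f n k T x \<otimes>\<^bsub>power_group G n\<^esub> cycle_retraction G f n k T y"
      using gap_in assms(2)
      by (auto simp: cycle_retraction_def power_group_eq_product_group PiE_iff hom_mult
          intro!: restrict_ext)
  qed
qed

lemma cycle_retraction_in_cycle_link:
  assumes "group G" "f \<in> hom G G" "k \<le> n" "T \<subset> {1..k}"
    and "y \<in> carrier (power_group G n)" "p \<in> T"
  shows "cycle_retraction G f n k T y \<in> cycle_link G f n k p"
proof -
  let ?r = "cycle_retraction G f n k T y"
  have fin: "finite T"
    using assms(4) finite_subset by blast
  have p: "1 \<le> p" "p \<le> k"
    using assms(4,6) by auto
  have "?r p = (if p = k then f (?r 1) else ?r (Suc p))"
  proof (cases "p = k")
    case True
    have "next_gap T k \<noteq> k"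
      using next_gap(2)[OF fin] assms(6) True by metis
    then have "k < next_gap T k"
      using next_gap(1)[OF fin, of k] by simp
    then show ?thesis
      using True p assms(3) next_gap_proper_subset(1)[OF assms(4)]
      by (simp add: cycle_retraction_def)
  next
    case False
    then show ?thesis
      using p assms(3) next_gap_Suc[OF assms(6)] by (simp add: cycle_retraction_def)
  qed
  then show ?thesis
    using cycle_retraction_hom[OF assms(1-4)] assms(5) by (auto simp: cycle_link_def hom_def)
qed

lemma cycle_retraction_fixes_cycle_links:
  assumes "T \<subset> {1..k}"
    and "x \<in> carrier (power_group G n)" "x \<in> (\<Inter>p\<in>T. cycle_link G f n k p)"
  shows "cycle_retraction G f n k T x = x"
proof
  fix j
  have fin: "finite T"
    using assms(1) finite_subset by blast
  show "cycle_retraction G f n k T x j = x j"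
  proof (cases "j \<in> {1..n} \<and> j \<le> k")
    case False
    then show ?thesis
      using assms(2)
      by (auto simp: cycle_retraction_def power_group_eq_product_group PiE_iff extensional_def)
  next
    case True
    let ?g = "next_gap T j"
    show ?thesis
    proof (cases "?g \<le> k")
      case True
      then show ?thesis
        using \<open>j \<in> {1..n} \<and> j \<le> k\<close> next_gap[OF fin, of j]
          cycle_links_chain[OF assms(3), of j ?g] by (simp add: cycle_retraction_def)
    next
      case False
      then have "{j..<k} \<subseteq> T" "k \<in> T"
        using \<open>j \<in> {1..n} \<and> j \<le> k\<close> next_gap(3)[OF fin, of j] by auto
      then have "x j = f (x 1)"
        using \<open>j \<in> {1..n} \<and> j \<le> k\<close> cycle_links_chain[OF assms(3), of j k] assms(3)
        by (auto simp: cycle_link_def)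
      moreover have "x 1 = x (next_gap T 1)"
        using next_gap[OF fin, of 1] next_gap_proper_subset(1)[OF assms(1)]
          cycle_links_chain[OF assms(3), of 1 "next_gap T 1"] by simp
      ultimately show ?thesis
        using False \<open>j \<in> {1..n} \<and> j \<le> k\<close> by (simp add: cycle_retraction_def)
    qed
  qed
qed

lemma fin_gen_proper_cycle_links:
  assumes "group G" "fin_gen G (carrier G)" "f \<in> hom G G" "k \<le> n"
    and "T \<subset> {1..k}" "T \<noteq> {}"
  shows "fin_gen (power_group G n) (\<Inter>p\<in>T. cycle_link G f n k p)"
proof -
  have group_power: "group (power_group G n)"
    using group_power_group[OF assms(1)] .
  have "(\<Inter>p\<in>T. cycle_link G f n k p) = cycle_retraction G f n k T ` carrier (power_group G n)"
  proof (intro equalityI subsetI)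
    fix x assume x: "x \<in> (\<Inter>p\<in>T. cycle_link G f n k p)"
    then have "x \<in> carrier (power_group G n)"
      using assms(6) by (auto simp: cycle_link_def)
    with x show "x \<in> cycle_retraction G f n k T ` carrier (power_group G n)"
      using cycle_retraction_fixes_cycle_links[OF assms(5)] by (metis imageI)
  qed (use cycle_retraction_in_cycle_link[OF assms(1,3,4,5)] in blast)
  then show ?thesis
    using fin_gen_hom_image[OF group_power group_power cycle_retraction_hom[OF assms(1,3-5)]
        fin_gen_power_group[OF assms(1,2)]]
    by simp
qed

lemma fin_gen_cycle_links_iff:
  assumes "group G" "fin_gen G (carrier G)" "f \<in> hom G G"
    and "\<not> fin_gen G {a \<in> carrier G. f a = a}"
    and "k \<le> n" "T \<subseteq> {1..k}" "T \<noteq> {}"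
  shows "fin_gen (power_group G n) (\<Inter>p\<in>T. cycle_link G f n k p) \<longleftrightarrow> T \<noteq> {1..k}"
proof (cases "T = {1..k}")
  case True
  then have "1 \<le> k"
    using assms(7) by auto
  with True show ?thesis
    using not_fin_gen_all_cycle_links[OF assms(1,3) _ assms(5,4)] by simp
next
  case False
  then show ?thesis
    using fin_gen_proper_cycle_links[OF assms(1-3,5) _ assms(7)] assms(6) by blast
qed

lemma realisable_zero_configuration:
  assumes "group K" "\<And>I. I \<subseteq> {1..n} \<Longrightarrow> I \<noteq> {} \<Longrightarrow> c I = 0"
  shows "realisable n c K"
proof -
  have "(\<Inter>i\<in>I. {\<one>\<^bsub>K\<^esub>}) = {\<one>\<^bsub>K\<^esub>}" if "I \<noteq> {}" for I
    using that by blast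
  then show ?thesis
    unfolding realisable_def using assms(2) fin_gen_trivial_subgroup[OF assms(1)]
      group.triv_subgroup[OF assms(1)]
    by (intro exI[of _ "\<lambda>_. {\<one>\<^bsub>K\<^esub>}"]) simp
qed

lemma realisable_single_one_configuration:
  assumes "group G" "fin_gen G (carrier G)" "f \<in> hom G G"
    and "\<not> fin_gen G {a \<in> carrier G. f a = a}"
    and "I0 \<subseteq> {1..n}" "I0 \<noteq> {}"
    and "\<And>I. I \<subseteq> {1..n} \<Longrightarrow> I \<noteq> {} \<Longrightarrow> c I = 0 \<longleftrightarrow> I \<noteq> I0"
  shows "realisable n c (power_group G n)"
proof -
  let ?P = "power_group G n"
  interpret P: group ?P
    using group_power_group[OF assms(1)] .
  define k where "k = card I0"
  have fin: "finite I0"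
    using assms(5) finite_subset by blast
  have "k \<le> n"
    using card_mono[OF _ assms(5)] by (simp add: k_def)
  have "\<exists>r. bij_betw r I0 {1..k}"
    by (rule finite_same_card_bij) (simp_all add: fin k_def)
  then obtain r where r: "bij_betw r I0 {1..k}"
    by blast
  define H where "H i = (if i \<in> I0 then cycle_link G f n k (r i) else {\<one>\<^bsub>?P\<^esub>})" for i
  have subgroup_H: "subgroup (H i) ?P" for i
    using subgroup_cycle_link[OF assms(1,3) _ \<open>k \<le> n\<close>] bij_betwE[OF r] P.triv_subgroup
    by (auto simp: H_def)
  have fin_gen_H: "fin_gen ?P (\<Inter>i\<in>I. H i) \<longleftrightarrow> I \<noteq> I0" if "I \<noteq> {}" for I
  proof (cases "I \<subseteq> I0")
    case True
    then have eq: "(\<Inter>i\<in>I. H i) = (\<Inter>p\<in>r ` I. cycle_link G f n k p)"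
      by (auto simp: H_def)
    have r_I: "r ` I \<subseteq> {1..k}" "r ` I \<noteq> {}" "r ` I = {1..k} \<longleftrightarrow> I = I0"
      using True r inj_on_image_eq_iff[of r I0 I I0] \<open>I \<noteq> {}\<close> by (auto simp: bij_betw_def)
    have "fin_gen ?P (\<Inter>i\<in>I. H i) \<longleftrightarrow> r ` I \<noteq> {1..k}"
      unfolding eq by (rule fin_gen_cycle_links_iff[OF assms(1-4) \<open>k \<le> n\<close> r_I(1,2)])
    with r_I(3) show ?thesis
      by blast
  next
    case False
    then obtain i where "i \<in> I" "i \<notin> I0"
      by blast
    then have "(\<Inter>i\<in>I. H i) \<subseteq> {\<one>\<^bsub>?P\<^esub>}"
      by (auto simp: H_def)
    moreover have "{\<one>\<^bsub>?P\<^esub>} \<subseteq> (\<Inter>i\<in>I. H i)"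
      using subgroup.one_closed[OF subgroup_H] by blast
    ultimately have "(\<Inter>i\<in>I. H i) = {\<one>\<^bsub>?P\<^esub>}"
      by (rule subset_antisym)
    moreover have "I \<noteq> I0"
      using False by blast
    ultimately show ?thesis
      using fin_gen_trivial_subgroup[OF P.is_group] by simp
  qed
  show ?thesis
    unfolding realisable_def
  proof (intro exI[of _ H] conjI ballI allI impI)
    fix I
    assume "I \<subseteq> {1..n} \<and> I \<noteq> {}"
    then show "fin_gen ?P (\<Inter>i\<in>I. H i) \<longleftrightarrow> c I = 0"
      using fin_gen_H assms(7) by blast
  qed (rule subgroup_H)
qed

lemma configuration_at_most_one_one_cases:
  assumes "configuration n c" "card {I. I \<subseteq> {1..n} \<and> I \<noteq> {} \<and> c I = 1} \<le> 1"
  obtains "\<And>I. I \<subseteq> {1..n} \<Longrightarrow> I \<noteq> {} \<Longrightarrow> c I = 0"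
    | I0 where "I0 \<subseteq> {1..n}" "I0 \<noteq> {}"
      "\<And>I. I \<subseteq> {1..n} \<Longrightarrow> I \<noteq> {} \<Longrightarrow> c I = 0 \<longleftrightarrow> I \<noteq> I0"
proof -
  define A where "A = {I. I \<subseteq> {1..n} \<and> I \<noteq> {} \<and> c I = 1}"
  have c_zero: "c I = 0 \<longleftrightarrow> I \<notin> A" if "I \<subseteq> {1..n}" "I \<noteq> {}" for I
    using assms(1) that by (auto simp: configuration_def A_def)
  have "finite A"
    unfolding A_def by (rule finite_subset[of _ "Pow {1..n}"]) auto
  then have A_unique: "\<forall>I\<in>A. \<forall>J\<in>A. I = J"
    using assms(2) card_le_Suc0_iff_eq[OF \<open>finite A\<close>] by (simp add: A_def)
  show thesis
  proof (cases "A = {}")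
    case True
    then show thesis
      using that(1) c_zero by blast
  next
    case False
    then obtain I0 where "I0 \<in> A"
      by blast
    with A_unique have A_eq: "I \<in> A \<longleftrightarrow> I = I0" for I
      by blast
    have "I0 \<subseteq> {1..n}" "I0 \<noteq> {}"
      using \<open>I0 \<in> A\<close> by (auto simp: A_def)
    moreover have "c I = 0 \<longleftrightarrow> I \<noteq> I0" if "I \<subseteq> {1..n}" "I \<noteq> {}" for I
      using c_zero[OF that] A_eq by simp
    ultimately show thesis
      by (rule that(2))
  qed
qed

theorem lemma2p5:
  fixes G :: "('a, 'b) monoid_scheme" and f :: "'a \<Rightarrow> 'a"
  assumes "group G"
    and "fin_gen G (carrier G)"
    and "f \<in> iso G G"
    and "\<not> fin_gen G {x \<in> carrier G. f x = x}"
  shows "\<forall>n::nat. n \<ge> 1 \<longrightarrow> (\<forall>c. configuration n c \<and>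
           card {I. I \<subseteq> {1..n} \<and> I \<noteq> {} \<and> c I = 1} \<le> 1 \<longrightarrow>
           realisable n c (power_group G n))"
proof (intro allI impI, elim conjE)
  fix n :: nat and c :: "nat set \<Rightarrow> nat"
  assume "configuration n c" "card {I. I \<subseteq> {1..n} \<and> I \<noteq> {} \<and> c I = 1} \<le> 1"
  then show "realisable n c (power_group G n)"
  proof (cases rule: configuration_at_most_one_one_cases)
    case 1
    then show ?thesis
      by (intro realisable_zero_configuration group_power_group assms(1))
  next
    case (2 I0)
    show ?thesis
      by (rule realisable_single_one_configuration[OF assms(1,2) iso_imp_homomorphism[OF assms(3)]
            assms(4) 2])
  qed
qed

end
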